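(* Let $n\geq 1$, $r\geq 1$, $q\geq 2$, and fix an initial configuration of room states. If $n$ prisoners do not have a winning strategy for $r$ rooms with $q$ states (from this initial configuration), then $n+1$ prisoners do not have a winning strategy for $r$ rooms with $q$ states (from this initial configuration).
   Context: The game: there are $n$ prisoners and $r$ rooms; each room contains a switch that is in one of $q$ states $\{0,1,\ldots,q-1\}$. The initial state of every room is known to the prisoners. A warden leads prisoners into rooms one at a time according to a schedule, i.e. an infinite sequence of (prisoner, room) pairs; a schedule is valid if every prisoner visits every room infinitely often. The rooms are indistinguishable to the prisoners, and prisoners have no information about time or other visits: on each visit a prisoner observes only the current state of the room, may change it to any state, and may declare that all prisoners have visited all rooms. A (deterministic) strategy assigns to each prisoner a rule determining, from the sequence of states that prisoner has observed so far (and their own previous actions), what new state to set and whether to declare. A strategy is winning if for every valid schedule some prisoner eventually declares, and every declaration is made only at a time when every prisoner has already visited every room. Strategies may differ between prisoners. *)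

theory Defs
  imports Main
begin

text \<open>
  Prisoners are 0..<n, rooms are 0..<r, switch states are 0..<q.
  A strategy S maps a prisoner p and the list of states p has observed so far
  (the last entry being the state currently observed) to a pair
  (new state to set, whether to declare).  Since a deterministic prisoner's own
  previous actions are a function of its previous observations, the observation
  history determines everything.
  A schedule maps each time step t to the pair (prisoner, room) visiting at time t.
\<close>

type_synonym strategy = "nat \<Rightarrow> nat list \<Rightarrow> nat \<times> bool"
type_synonym schedule = "nat \<Rightarrow> nat \<times> nat"

fun run :: "strategy \<Rightarrow> schedule \<Rightarrow> (nat \<Rightarrow> nat) \<Rightarrow> nat
            \<Rightarrow> (nat \<Rightarrow> nat) \<times> (nat \<Rightarrow> nat list)" where
  "run S sch init 0 = (init, (\<lambda>p. []))"
| "run S sch init (Suc t) =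
     (let (cfg, h) = run S sch init t;
          (p, i) = sch t;
          obs = h p @ [cfg i]
      in (cfg(i := fst (S p obs)), h(p := obs)))"

definition declares :: "strategy \<Rightarrow> schedule \<Rightarrow> (nat \<Rightarrow> nat) \<Rightarrow> nat \<Rightarrow> bool" where
  "declares S sch init t =
     (let (cfg, h) = run S sch init t;
          (p, i) = sch t
      in snd (S p (h p @ [cfg i])))"

definition valid_schedule :: "nat \<Rightarrow> nat \<Rightarrow> schedule \<Rightarrow> bool" where
  "valid_schedule n r sch =
     ((\<forall>t. fst (sch t) < n \<and> snd (sch t) < r) \<and>
      (\<forall>p<n. \<forall>i<r. \<forall>t. \<exists>t'\<ge>t. sch t' = (p, i)))"

definition all_visited :: "nat \<Rightarrow> nat \<Rightarrow> schedule \<Rightarrow> nat \<Rightarrow> bool" where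
  "all_visited n r sch t = (\<forall>p<n. \<forall>i<r. \<exists>t'\<le>t. sch t' = (p, i))"

definition winning_strategy ::
  "nat \<Rightarrow> nat \<Rightarrow> nat \<Rightarrow> (nat \<Rightarrow> nat) \<Rightarrow> strategy \<Rightarrow> bool" where
  "winning_strategy n r q init S =
     ((\<forall>p<n. \<forall>obs. fst (S p obs) < q) \<and>
      (\<forall>sch. valid_schedule n r sch \<longrightarrow>
          (\<exists>t. declares S sch init t) \<and>
          (\<forall>t. declares S sch init t \<longrightarrow> all_visited n r sch t)))"

definition has_winning_strategy :: "nat \<Rightarrow> nat \<Rightarrow> nat \<Rightarrow> (nat \<Rightarrow> nat) \<Rightarrow> bool" where
  "has_winning_strategy n r q init = (\<exists>S. winning_strategy n r q init S)"

end

theory Submission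
  imports Defs
begin

text \<open>
  Given a winning strategy for n + 1 prisoners, n prisoners can play it: prisoner 0 plays the
  two roles 0 and n, every other prisoner p plays role p alone.  Each real visit of p to a room
  is replayed as two consecutive visits to that room, first by role p and then by its partner
  role (n for p = 0, p itself otherwise), which observes the state role p has just set; only
  the second state is written into the room.  Since every prisoner can keep the histories of
  its roles, the real run is the image of the (n + 1)-prisoner run under the schedule with
  every step doubled.  That schedule is valid, so the strategy declares, and only once the
  doubled schedule, hence also the original one, has brought every prisoner to every room.
\<close>

definition partner :: "nat \<Rightarrow> nat \<Rightarrow> nat" where
  "partner n p = (if p = 0 then n else p)"

definition simulator :: "nat \<Rightarrow> nat \<Rightarrow> nat" where
  "simulator n x = (if x = n then 0 else x)"

lemma partner_le: "p < n \<Longrightarrow> partner n p \<le> n"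
  by (simp add: partner_def)

lemma simulator_partner: "p < n \<Longrightarrow> simulator n (partner n p) = p"
  by (simp add: simulator_def partner_def)

lemma simulator_self: "p < n \<Longrightarrow> simulator n p = p"
  by (simp add: simulator_def)

lemma simulator_eq_iff: "p < n \<Longrightarrow> simulator n x = p \<longleftrightarrow> x = p \<or> x = partner n p"
  by (auto simp: simulator_def partner_def)

definition sim_visit ::
  "strategy \<Rightarrow> nat \<Rightarrow> nat \<Rightarrow> nat \<Rightarrow> (nat \<Rightarrow> nat list) \<Rightarrow> (nat \<Rightarrow> nat list)" where
  "sim_visit S n p ob H =
     (let H1 = H(p := H p @ [ob]) in H1(partner n p := H1 (partner n p) @ [fst (S p (H1 p))]))"

definition sim_histories :: "strategy \<Rightarrow> nat \<Rightarrow> nat \<Rightarrow> nat list \<Rightarrow> (nat \<Rightarrow> nat list)" where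
  "sim_histories S n p obs = fold (sim_visit S n p) obs (\<lambda>_. [])"

lemma sim_histories_Nil [simp]: "sim_histories S n p [] = (\<lambda>_. [])"
  by (simp add: sim_histories_def)

lemma sim_histories_snoc:
  "sim_histories S n p (obs @ [ob]) = sim_visit S n p ob (sim_histories S n p obs)"
  by (simp add: sim_histories_def)

definition simulating_strategy :: "strategy \<Rightarrow> nat \<Rightarrow> strategy" where
  "simulating_strategy S n p obs =
     (let first = S p (sim_histories S n p (butlast obs) p @ [last obs]);
          second = S (partner n p) (sim_histories S n p obs (partner n p))
      in (fst second, snd first \<or> snd second))"

definition role_histories :: "strategy \<Rightarrow> nat \<Rightarrow> (nat \<Rightarrow> nat list) \<Rightarrow> (nat \<Rightarrow> nat list)" where
  "role_histories S n h x = sim_histories S n (simulator n x) (h (simulator n x)) x"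

lemma role_histories_self: "p < n \<Longrightarrow> role_histories S n h p = sim_histories S n p (h p) p"
  by (simp add: role_histories_def simulator_self)

lemma role_histories_partner:
  "p < n \<Longrightarrow> role_histories S n h (partner n p) = sim_histories S n p (h p) (partner n p)"
  by (simp add: role_histories_def simulator_partner)

lemma role_histories_snoc:
  assumes "p < n"
  shows "role_histories S n (h(p := h p @ [ob])) = sim_visit S n p ob (role_histories S n h)"
proof
  fix x
  show "role_histories S n (h(p := h p @ [ob])) x = sim_visit S n p ob (role_histories S n h) x"
  proof (cases "simulator n x = p")
    case True
    then have "x = p \<or> x = partner n p" using simulator_eq_iff[OF assms] by blast
    then show ?thesis
      using assms by (auto simp: role_histories_self role_histories_partner
          sim_histories_snoc sim_visit_def Let_def)
  next
    case False
    then have "x \<noteq> p" "x \<noteq> partner n p" using simulator_eq_iff[OF assms] by blast+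
    then show ?thesis using False by (simp add: role_histories_def sim_visit_def Let_def)
  qed
qed

definition doubled_schedule :: "nat \<Rightarrow> schedule \<Rightarrow> schedule" where
  "doubled_schedule n sch u =
     (let (p, i) = sch (u div 2) in if even u then (p, i) else (partner n p, i))"

lemma doubled_schedule_even [simp]: "doubled_schedule n sch (2 * t) = sch t"
  by (simp add: doubled_schedule_def split: prod.split)

lemma doubled_schedule_odd [simp]:
  "doubled_schedule n sch (Suc (2 * t)) = (partner n (fst (sch t)), snd (sch t))"
  by (simp add: doubled_schedule_def split: prod.split)

lemma valid_doubled_schedule:
  assumes "valid_schedule n r sch" and "n \<ge> 1"
  shows "valid_schedule (n + 1) r (doubled_schedule n sch)"
  unfolding valid_schedule_def
proof (intro conjI allI impI)
  fix u
  have "fst (sch (u div 2)) < n" "snd (sch (u div 2)) < r"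
    using assms(1) by (auto simp: valid_schedule_def)
  then show "fst (doubled_schedule n sch u) < n + 1" "snd (doubled_schedule n sch u) < r"
    by (auto simp: doubled_schedule_def less_Suc_eq_le partner_le split: prod.split)
next
  fix p i t
  assume p: "p < n + 1" and i: "i < r"
  show "\<exists>t'\<ge>t. doubled_schedule n sch t' = (p, i)"
  proof (cases "p < n")
    case True
    then obtain t' where "t' \<ge> t" "sch t' = (p, i)"
      using assms(1) i unfolding valid_schedule_def by blast
    then show ?thesis by (intro exI[of _ "2 * t'"]) auto
  next
    case False
    obtain t' where "t' \<ge> t" "sch t' = (0, i)"
      using assms i unfolding valid_schedule_def by (metis less_le_trans zero_less_one)
    then show ?thesis using False p by (intro exI[of _ "Suc (2 * t')"]) (auto simp: partner_def)
  qed
qed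

lemma all_visited_doubled_schedule:
  assumes "all_visited (n + 1) r (doubled_schedule n sch) u" and "\<forall>t. fst (sch t) < n"
  shows "all_visited n r sch (u div 2)"
  unfolding all_visited_def
proof (intro allI impI)
  fix p i
  assume "p < n" and "i < r"
  then have "p < n + 1" by simp
  then obtain u' where "u' \<le> u" and visit: "doubled_schedule n sch u' = (p, i)"
    using assms(1) \<open>i < r\<close> unfolding all_visited_def by blast
  have "sch (u' div 2) = (p, i)"
  proof (cases "even u'")
    case True
    then show ?thesis using visit by (auto elim: evenE)
  next
    case False
    then obtain k where k: "u' = Suc (2 * k)" by (auto elim: oddE)
    have "fst (sch k) < n" using assms(2) by blast
    with visit \<open>p < n\<close> have "sch k = (p, i)"
      by (auto simp: k partner_def split: if_splits intro: prod_eqI)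
    then show ?thesis by (simp add: k)
  qed
  moreover have "u' div 2 \<le> u div 2" using \<open>u' \<le> u\<close> by (simp add: div_le_mono)
  ultimately show "\<exists>t'\<le>u div 2. sch t' = (p, i)" by blast
qed

lemma run_doubled_schedule:
  assumes "\<forall>t. fst (sch t) < n"
  shows "run S (doubled_schedule n sch) init (2 * t) =
    (fst (run (simulating_strategy S n) sch init t),
     role_histories S n (snd (run (simulating_strategy S n) sch init t)))"
proof (induction t)
  case 0
  then show ?case by (simp add: role_histories_def fun_eq_iff)
next
  case (Suc t)
  let ?D = "doubled_schedule n sch" and ?T = "simulating_strategy S n"
  obtain cfg h where run_t: "run ?T sch init t = (cfg, h)" by fastforce
  obtain p i where visit: "sch t = (p, i)" by fastforce
  have "p < n" using assms visit by (metis fst_conv)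
  define G where "G = role_histories S n h"
  define h' where "h' = h(p := h p @ [cfg i])"
  define obs where "obs = G p @ [cfg i]"
  have G': "role_histories S n h' = sim_visit S n p (cfg i) G"
    using role_histories_snoc[OF \<open>p < n\<close>] by (simp add: G_def h'_def)
  have "run S ?D init (Suc (2 * t)) = (cfg(i := fst (S p obs)), G(p := obs))"
    using Suc.IH run_t visit by (simp add: G_def obs_def Let_def)
  then have "run S ?D init (2 * Suc t) =
      (cfg(i := fst (S (partner n p) (role_histories S n h' (partner n p)))), role_histories S n h')"
    using visit by (simp add: G' sim_visit_def obs_def Let_def)
  moreover have "run ?T sch init (Suc t) =
      (cfg(i := fst (S (partner n p) (role_histories S n h' (partner n p)))), h')"
    using run_t visit \<open>p < n\<close>
    by (simp add: simulating_strategy_def role_histories_partner h'_def Let_def)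
  ultimately show ?case by (simp only: fst_conv snd_conv)
qed

lemma declares_simulating_strategy:
  assumes "\<forall>t. fst (sch t) < n"
  shows "declares (simulating_strategy S n) sch init t \<longleftrightarrow>
    declares S (doubled_schedule n sch) init (2 * t) \<or>
    declares S (doubled_schedule n sch) init (Suc (2 * t))"
proof -
  obtain cfg h where run_t: "run (simulating_strategy S n) sch init t = (cfg, h)" by fastforce
  obtain p i where visit: "sch t = (p, i)" by fastforce
  have "p < n" using assms visit by (metis fst_conv)
  have "run S (doubled_schedule n sch) init (2 * t) = (cfg, role_histories S n h)"
    using run_doubled_schedule[OF assms, of S init t] run_t by simp
  then show ?thesis
    using \<open>p < n\<close> run_t visit
    by (simp add: declares_def simulating_strategy_def role_histories_self
        role_histories_partner sim_histories_snoc sim_visit_def Let_def)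
qed

lemma winning_simulating_strategy:
  assumes "winning_strategy (n + 1) r q init S" and "n \<ge> 1"
  shows "winning_strategy n r q init (simulating_strategy S n)"
  unfolding winning_strategy_def
proof (intro conjI allI impI)
  fix p obs
  assume "p < n"
  then show "fst (simulating_strategy S n p obs) < q"
    using assms(1) partner_le
    by (simp add: simulating_strategy_def winning_strategy_def Let_def less_Suc_eq_le)
next
  fix sch
  assume valid: "valid_schedule n r sch"
  then have bounded: "\<forall>t. fst (sch t) < n"
    by (simp add: valid_schedule_def)
  have "valid_schedule (n + 1) r (doubled_schedule n sch)"
    using valid_doubled_schedule[OF valid assms(2)] .
  then have doubled_wins: "\<exists>u. declares S (doubled_schedule n sch) init u"
      "\<forall>u. declares S (doubled_schedule n sch) init u \<longrightarrow>
         all_visited (n + 1) r (doubled_schedule n sch) u"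
    using assms(1) by (auto simp: winning_strategy_def)
  note declares_iff = declares_simulating_strategy[OF bounded]
  obtain u where "declares S (doubled_schedule n sch) init u"
    using doubled_wins(1) by blast
  moreover have "u = 2 * (u div 2) \<or> u = Suc (2 * (u div 2))" by presburger
  ultimately show "\<exists>t. declares (simulating_strategy S n) sch init t"
    using declares_iff by metis
  show "all_visited n r sch t" if "declares (simulating_strategy S n) sch init t" for t
  proof -
    have "declares S (doubled_schedule n sch) init (2 * t) \<or>
        declares S (doubled_schedule n sch) init (Suc (2 * t))"
      using that declares_iff by blast
    then show ?thesis
      using doubled_wins(2) all_visited_doubled_schedule[OF _ bounded, of r "2 * t"]
        all_visited_doubled_schedule[OF _ bounded, of r "Suc (2 * t)"]
      by auto
  qed
qed

theorem mainTheorem3: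
  fixes n r q :: nat and init :: "nat \<Rightarrow> nat"
  assumes "n \<ge> 1" and "r \<ge> 1" and "q \<ge> 2"
    and "\<forall>i<r. init i < q"
    and "\<not> has_winning_strategy n r q init"
  shows "\<not> has_winning_strategy (n + 1) r q init"
  using assms(1,5) winning_simulating_strategy unfolding has_winning_strategy_def by blast

end
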